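(* Let $q>3$ be prime and $A\in\mathbb{F}_q[T]$ monic irreducible with $a=\deg A$. Then \[ \sum_{\substack{X \neq 0 \\ A \mid X}} \frac{1}{|X|^{2s}} \sum_{\substack{Y \bmod AX \\ Y \equiv 1 \bmod A \\ (X, Y) = 1}} 1 = \frac{q^{a(1-2s)}}{1-q^{-2as}} \frac{\zeta_{\mathbb{F}_{q}[T]}(2s-1)}{\zeta_{\mathbb{F}_{q}[T]}(2s)}, \] where $X$ runs over nonzero monic polynomials.
   Context: $|X|=q^{\deg X}$; $(X,Y)$ is the monic gcd; $\zeta_{\mathbb{F}_q[T]}(s)=\sum_{X\text{ monic}}|X|^{-s}=\frac{1}{1-q^{1-s}}$. *)

theory Defs
  imports "HOL-Analysis.Analysis" "HOL-Computational_Algebra.Polynomial_Factorial"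
begin

text \<open>Polynomials over a finite field of prime order q are modelled as
  'a poly with 'a :: {finite, field} and CARD('a) = q prime.\<close>

definition pnorm :: "'a::{finite,field} poly \<Rightarrow> complex" where
  "pnorm X = of_nat (CARD('a) ^ degree X)"

definition zeta_Fq :: "'a::{finite,field} itself \<Rightarrow> complex \<Rightarrow> complex" where
  "zeta_Fq TYPE('a) s = infsum (\<lambda>X::'a poly. pnorm X powr (-s)) {X. lead_coeff X = 1}"

text \<open>Number of residues Y mod AX with Y = 1 mod A and (X,Y) = 1.
  Residues mod AX are represented by the polynomials of degree < deg(AX).\<close>
definition count_Y :: "'a::{finite,field} poly \<Rightarrow> 'a poly \<Rightarrow> nat" where
  "count_Y A X = card {Y. degree Y < degree (A * X) \<and> Y mod A = 1 mod A \<and> coprime X Y}"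

end

theory Submission
  imports Defs
begin

(* Put z = q^(-2s), so that |X|^(-2s) = z^(deg X). Summing z^(deg X) over the pairs (X, Y) with
   X monic, A | X, and Y a residue modulo A X not divisible by A is elementary: for each X there
   are q^(deg X) (q^(deg A) - 1) such Y. Dividing out the monic gcd D of X and Y, which is prime
   to A, identifies these pairs with the triples (D, X', Y') where (X', Y') is a pair of the same
   kind with X' and Y' coprime; hence the elementary sum is the product of the sum of z^(deg D)
   over monic D prime to A, namely (1 - z^(deg A)) / (1 - q z), and the sum over coprime pairs.
   Finally the coprime Y fall into q^(deg A) - 1 classes modulo A of the same size count_Y A X,
   since multiplication by a unit modulo A X congruent to a given nonzero residue modulo A maps
   one class injectively into another. *)

lemma of_nat_power_powr:
  assumes "0 < m"
  shows "(of_nat (m ^ n) :: complex) powr v = (of_nat m powr v) ^ n"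
proof (induction n)
  case 0
  then show ?case by (simp add: powr_def)
next
  case (Suc n)
  have "(of_nat (m ^ Suc n) :: complex) powr v = (of_nat m * of_nat (m ^ n)) powr v"
    by simp
  also have "\<dots> = of_nat m powr v * of_nat (m ^ n) powr v"
    by (rule powr_times_real) auto
  finally show ?case using Suc by simp
qed

lemma pnorm_powr:
  "pnorm (X :: 'a::{finite,field} poly) powr v = (of_nat CARD('a) powr v) ^ degree X"
  unfolding pnorm_def by (rule of_nat_power_powr) simp

lemma of_nat_powr_one_minus:
  assumes "0 < m"
  shows "(of_nat m :: complex) powr (1 - w) = of_nat m * of_nat m powr (- w)"
  using assms powr_add[of "of_nat m :: complex" 1 "- w"] by simp

lemma two_le_card_field: "2 \<le> CARD('a::{finite,field})"
proof -
  have "card {0::'a, 1} \<le> CARD('a)" by (rule card_mono) auto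
  then show ?thesis by simp
qed

lemma irreducible_degree_pos:
  fixes A :: "'a::field poly"
  assumes "irreducible A"
  shows "0 < degree A"
proof -
  have "A \<noteq> 0" and "\<not> is_unit A" using assms by (auto simp: irreducible_def)
  then show ?thesis using is_unit_iff_degree by blast
qed

section \<open>Counting polynomials over a finite field\<close>

definition polys_below :: "nat \<Rightarrow> 'a::zero poly set" where
  "polys_below n = {p. \<forall>i\<ge>n. coeff p i = 0}"

lemma polys_below_iff: "p \<in> polys_below n \<longleftrightarrow> p = 0 \<or> degree p < n"
proof
  assume "p \<in> polys_below n"
  then have "lead_coeff p = 0" if "n \<le> degree p"
    using that by (simp add: polys_below_def)
  then show "p = 0 \<or> degree p < n" by force
qed (auto simp: polys_below_def coeff_eq_0)

lemma polys_below_0: "polys_below 0 = {0}"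
  by (auto simp: polys_below_def poly_eq_iff)

lemma polys_below_Suc:
  "polys_below (Suc n) = (\<lambda>(a, p). pCons a p) ` (UNIV \<times> polys_below n)"
proof (intro equalityI subsetI)
  fix p :: "'a poly"
  assume p: "p \<in> polys_below (Suc n)"
  obtain a r where p_eq: "p = pCons a r" by (rule pCons_cases)
  have "coeff r i = 0" if "n \<le> i" for i
    using p that by (simp add: polys_below_def p_eq) (metis Suc_le_mono coeff_pCons_Suc)
  then show "p \<in> (\<lambda>(a, p). pCons a p) ` (UNIV \<times> polys_below n)"
    by (auto simp: p_eq polys_below_def)
qed (auto simp: polys_below_def coeff_pCons split: nat.split)

lemma finite_polys_below: "finite (polys_below n :: 'a::{finite,zero} poly set)"
  by (induction n) (simp_all add: polys_below_0 polys_below_Suc)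

lemma card_polys_below: "card (polys_below n :: 'a::{finite,zero} poly set) = CARD('a) ^ n"
proof (induction n)
  case 0
  then show ?case by (simp add: polys_below_0)
next
  case (Suc n)
  have "inj_on (\<lambda>(a, p). pCons a p) (UNIV \<times> polys_below n :: ('a \<times> 'a poly) set)"
    by (auto simp: inj_on_def)
  then show ?case
    using Suc by (simp add: polys_below_Suc card_image card_cartesian_product)
qed

lemma multiples_in_polys_below:
  fixes A :: "'a::idom poly"
  assumes "A \<noteq> 0"
  shows "{Y \<in> polys_below (degree A + n). A dvd Y} = (\<lambda>W. A * W) ` polys_below n"
proof -
  have "A * W \<in> polys_below (degree A + n) \<longleftrightarrow> W \<in> polys_below n" for W
    using assms by (cases "W = 0") (auto simp: polys_below_iff degree_mult_eq)
  then show ?thesis by (auto elim!: dvdE)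
qed

definition monic_polys :: "nat \<Rightarrow> 'a::zero_neq_one poly set" where
  "monic_polys n = {p. degree p = n \<and> lead_coeff p = 1}"

lemma monic_polys_iff: "p \<in> monic_polys n \<longleftrightarrow> coeff p n = 1 \<and> (\<forall>i>n. coeff p i = 0)"
proof
  assume "p \<in> monic_polys n"
  then show "coeff p n = 1 \<and> (\<forall>i>n. coeff p i = 0)"
    by (auto simp: monic_polys_def coeff_eq_0)
next
  assume p: "coeff p n = 1 \<and> (\<forall>i>n. coeff p i = 0)"
  then have "degree p \<le> n" "n \<le> degree p"
    by (auto intro: degree_le le_degree)
  with p show "p \<in> monic_polys n" by (simp add: monic_polys_def)
qed

lemma bij_betw_monic_polys:
  "bij_betw (\<lambda>p. p + monom 1 n) (polys_below n) (monic_polys n :: 'a::comm_ring_1 poly set)"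
proof (rule bij_betwI')
  fix p :: "'a poly"
  assume "p \<in> polys_below n"
  then show "p + monom 1 n \<in> monic_polys n"
    by (auto simp: monic_polys_iff polys_below_def coeff_monom)
next
  fix p :: "'a poly"
  assume "p \<in> monic_polys n"
  then have "p - monom 1 n \<in> polys_below n"
    by (auto simp: monic_polys_iff polys_below_def coeff_monom)
  then show "\<exists>r\<in>polys_below n. p = r + monom 1 n" by force
qed simp

lemma finite_monic_polys: "finite (monic_polys n :: 'a::{finite,comm_ring_1} poly set)"
  using bij_betw_finite[OF bij_betw_monic_polys] finite_polys_below by blast

lemma card_monic_polys: "card (monic_polys n :: 'a::{finite,comm_ring_1} poly set) = CARD('a) ^ n"
  using bij_betw_same_card[OF bij_betw_monic_polys] card_polys_below by metis

section \<open>Sums over monic polynomials\<close>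

lemma has_sum_Sigma_finite_fibres:
  fixes f :: "'a \<times> 'b \<Rightarrow> 'c::banach"
  assumes fin: "\<And>x. x \<in> A \<Longrightarrow> finite (B x)"
    and norm_summable: "(\<lambda>x. \<Sum>y\<in>B x. norm (f (x, y))) summable_on A"
    and sums: "((\<lambda>x. \<Sum>y\<in>B x. f (x, y)) has_sum S) A"
  shows "(f has_sum S) (Sigma A B)"
proof (rule has_sum_SigmaI[OF _ sums])
  show "((\<lambda>y. f (x, y)) has_sum (\<Sum>y\<in>B x. f (x, y))) (B x)" if "x \<in> A" for x
    using fin[OF that] by (rule has_sum_finiteI) simp
  have "(\<lambda>p. norm (f p)) summable_on Sigma A B"
    by (rule summable_on_SigmaI[OF _ norm_summable]) (auto intro: has_sum_finiteI fin)
  then show "f summable_on Sigma A B" by (rule abs_summable_summable)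
qed

lemma has_sum_product_cancel_left:
  fixes f g :: "_ \<Rightarrow> complex"
  assumes prod: "((\<lambda>(x, y). f x * g y) has_sum S) (A \<times> B)"
    and f: "(f has_sum F) A" and "F \<noteq> 0" and "a \<in> A" and "f a \<noteq> 0"
  shows "(g has_sum (S / F)) B"
proof -
  have "(\<lambda>y. f a * g y) summable_on B"
    using summable_on_SigmaD1[of "\<lambda>x y. f x * g y", OF _ \<open>a \<in> A\<close>] prod
    by (auto dest: has_sum_imp_summable)
  then have "g summable_on B" using summable_on_cmult_right' \<open>f a \<noteq> 0\<close> by blast
  then obtain G where G: "(g has_sum G) B" by (auto simp: summable_on_def)
  have "((\<lambda>x. f x * G) has_sum S) A"
    by (rule has_sum_Sigma'[OF prod]) (use G in \<open>auto intro: has_sum_cmult_right\<close>)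
  moreover have "((\<lambda>x. f x * G) has_sum F * G) A" using f by (rule has_sum_cmult_left)
  ultimately have "S = F * G" using has_sum_unique by blast
  with G \<open>F \<noteq> 0\<close> show ?thesis by simp
qed

lemma has_sum_monic_powers:
  fixes u :: complex
  assumes "norm (of_nat CARD('a) * u) < 1"
  shows "((\<lambda>X::'a::{finite,field} poly. u ^ degree X) has_sum (1 / (1 - of_nat CARD('a) * u)))
           {X. lead_coeff X = 1}"
proof -
  let ?w = "of_nat CARD('a) * u"
  let ?M = "monic_polys :: nat \<Rightarrow> 'a poly set"
  have "(\<Sum>X\<in>?M n. u ^ degree X) = (\<Sum>X\<in>?M n. u ^ n)" for n
    by (rule sum.cong) (auto simp: monic_polys_def)
  then have sum_eq: "(\<Sum>X\<in>?M n. u ^ degree X) = ?w ^ n" for n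
    by (simp add: card_monic_polys power_mult_distrib)
  have "(\<Sum>X\<in>?M n. norm (u ^ degree X)) = (\<Sum>X\<in>?M n. norm u ^ n)" for n
    by (rule sum.cong) (auto simp: monic_polys_def norm_power)
  then have norm_sum_eq: "(\<Sum>X\<in>?M n. norm (u ^ degree X)) = norm ?w ^ n" for n
    by (simp add: card_monic_polys power_mult_distrib norm_mult)
  have "summable (\<lambda>n. norm ?w ^ n)"
    using assms by (simp add: summable_geometric)
  then have "((\<lambda>n. ?w ^ n) has_sum (1 / (1 - ?w))) UNIV"
    using assms by (intro norm_summable_imp_has_sum geometric_sums) (simp_all add: norm_power)
  moreover have "(\<lambda>n. norm ?w ^ n) summable_on UNIV"
    using \<open>summable (\<lambda>n. norm ?w ^ n)\<close> by (simp add: summable_on_UNIV_nonneg_real_iff)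
  ultimately have "((\<lambda>(n, X). u ^ degree X) has_sum (1 / (1 - ?w))) (Sigma UNIV ?M)"
    by (intro has_sum_Sigma_finite_fibres) (simp_all add: finite_monic_polys sum_eq norm_sum_eq)
  moreover have "bij_betw (\<lambda>X. (degree X, X)) {X. lead_coeff X = 1} (Sigma UNIV ?M)"
    by (rule bij_betwI[where g = snd]) (auto simp: monic_polys_def)
  ultimately show ?thesis
    using has_sum_reindex_bij_betw[where f = "\<lambda>(n, X). u ^ degree X"] by fastforce
qed

lemma norm_card_powr_less_one:
  assumes "1 < Re w"
  shows "norm ((of_nat CARD('a::{finite,field}) :: complex) powr (1 - w)) < 1"
proof -
  have "norm ((of_nat CARD('a) :: complex) powr (1 - w)) = real CARD('a) powr (1 - Re w)"
    by (subst norm_powr_real_powr) auto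
  also have "\<dots> < 1"
    using two_le_card_field[where 'a='a] assms by (intro powr_less_one) auto
  finally show ?thesis .
qed

lemma zeta_Fq_eq:
  assumes "1 < Re w"
  shows "zeta_Fq TYPE('a::{finite,field}) w = 1 / (1 - of_nat CARD('a) powr (1 - w))"
proof -
  let ?q = "CARD('a)"
  have q_pos: "0 < ?q" by simp
  have "norm (of_nat ?q * of_nat ?q powr (- w)) < 1"
    using norm_card_powr_less_one[where 'a='a, OF assms]
    by (simp add: of_nat_powr_one_minus[OF q_pos])
  from has_sum_monic_powers[OF this]
  have "((\<lambda>X::'a poly. pnorm X powr (- w)) has_sum (1 / (1 - of_nat ?q powr (1 - w))))
          {X. lead_coeff X = 1}"
    by (simp add: pnorm_powr of_nat_powr_one_minus[OF q_pos])
  then show ?thesis unfolding zeta_Fq_def by (rule infsumI)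
qed

section \<open>Bezout identity and coprimality\<close>

lemma poly_bezout_monic:
  fixes X Y :: "'a::field poly"
  assumes "X \<noteq> 0"
  obtains D u v where "D = u * X + v * Y" "D dvd X" "D dvd Y" "lead_coeff D = 1"
proof -
  define I where "I = {D. D \<noteq> 0 \<and> (\<exists>u v. D = u * X + v * Y)}"
  have "X = 1 * X + 0 * Y" by simp
  then have "X \<in> I" using assms unfolding I_def by blast
  then obtain D0 where "D0 \<in> I" and minimal: "\<And>D. D \<in> I \<Longrightarrow> degree D0 \<le> degree D"
    using ex_has_least_nat[of "\<lambda>D. D \<in> I" X degree] by blast
  then obtain u0 v0 where D0: "D0 = u0 * X + v0 * Y" "D0 \<noteq> 0" unfolding I_def by blast
  \<comment> \<open>A combination of least degree divides all others: the remainder is again a combination.\<close>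
  have D0_dvd: "D0 dvd a * X + b * Y" for a b
  proof (rule ccontr)
    define Z where "Z = a * X + b * Y"
    define k where "k = Z div D0"
    assume "\<not> D0 dvd a * X + b * Y"
    then have "Z mod D0 \<noteq> 0" by (simp add: Z_def dvd_eq_mod_eq_0)
    have "Z mod D0 = Z - k * D0" by (simp add: k_def minus_div_mult_eq_mod)
    also have "\<dots> = (a - k * u0) * X + (b - k * v0) * Y" by (simp add: Z_def D0(1) algebra_simps)
    finally have "Z mod D0 \<in> I" using \<open>Z mod D0 \<noteq> 0\<close> unfolding I_def by blast
    then have "degree D0 \<le> degree (Z mod D0)" by (rule minimal)
    moreover have "degree (Z mod D0) < degree D0"
      using D0(2) \<open>Z mod D0 \<noteq> 0\<close> by (rule degree_mod_less')
    ultimately show False by simp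
  qed
  define c where "c = inverse (lead_coeff D0)"
  have "c \<noteq> 0" using D0(2) by (simp add: c_def)
  show ?thesis
  proof
    show "smult c D0 = smult c u0 * X + smult c v0 * Y"
      by (simp add: D0(1) smult_add_right)
    show "smult c D0 dvd X" "smult c D0 dvd Y"
      using D0_dvd[of 1 0] D0_dvd[of 0 1] \<open>c \<noteq> 0\<close> by (simp_all add: smult_dvd_iff)
    show "lead_coeff (smult c D0) = 1"
      using D0(2) by (simp add: c_def)
  qed
qed

lemma coprime_iff_bezout_poly:
  fixes X Y :: "'a::field poly"
  shows "coprime X Y \<longleftrightarrow> (\<exists>u v. u * X + v * Y = 1)"
proof
  assume coprime: "coprime X Y"
  show "\<exists>u v. u * X + v * Y = 1"
  proof (cases "X = 0")
    case True
    with coprime have "is_unit Y" by simp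
    then obtain k where "1 = Y * k" by (rule dvdE)
    then have "0 * X + k * Y = 1" by (simp add: mult.commute)
    then show ?thesis by blast
  next
    case False
    then obtain D u v where D: "D = u * X + v * Y" "D dvd X" "D dvd Y"
      by (rule poly_bezout_monic)
    with coprime have "is_unit D" by (simp add: coprime_common_divisor)
    then obtain k where "1 = D * k" by (rule dvdE)
    with D(1) have "(k * u) * X + (k * v) * Y = 1" by (simp add: algebra_simps)
    then show ?thesis by blast
  qed
next
  assume "\<exists>u v. u * X + v * Y = 1"
  then obtain u v where uv: "u * X + v * Y = 1" by blast
  show "coprime X Y"
  proof (rule coprimeI)
    fix c assume "c dvd X" "c dvd Y"
    then have "c dvd u * X + v * Y" by simp
    then show "is_unit c" by (simp add: uv)
  qed
qed

lemma coprime_mult_right_poly: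
  fixes X U V :: "'a::field poly"
  assumes "coprime X U" "coprime X V"
  shows "coprime X (U * V)"
proof -
  obtain u1 v1 where 1: "u1 * X + v1 * U = 1" using assms(1) coprime_iff_bezout_poly by blast
  obtain u2 v2 where 2: "u2 * X + v2 * V = 1" using assms(2) coprime_iff_bezout_poly by blast
  have "(u1 * X + v1 * U) * (u2 * X + v2 * V) = 1" by (simp add: 1 2)
  then have "(u1 * u2 * X + u1 * v2 * V + v1 * U * u2) * X + (v1 * v2) * (U * V) = 1"
    by (simp add: algebra_simps)
  then show ?thesis using coprime_iff_bezout_poly by blast
qed

lemma coprime_dvd_mult_right_poly:
  fixes W U V :: "'a::field poly"
  assumes "coprime W U" "W dvd U * V"
  shows "W dvd V"
proof -
  obtain a b where ab: "a * W + b * U = 1" using assms(1) coprime_iff_bezout_poly by blast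
  have "V = (a * W + b * U) * V" by (simp add: ab)
  also have "\<dots> = (a * V) * W + b * (U * V)" by (simp add: algebra_simps)
  also have "W dvd \<dots>" using assms(2) by simp
  finally show ?thesis .
qed

lemma prime_elem_coprime_if_not_dvd:
  fixes p :: "'a::algebraic_semidom"
  assumes "prime_elem p" "\<not> p dvd a"
  shows "coprime p a"
proof (rule coprimeI)
  fix d assume "d dvd p" "d dvd a"
  show "is_unit d"
  proof (rule ccontr)
    assume "\<not> is_unit d"
    with \<open>prime_elem p\<close> \<open>d dvd p\<close> have "p dvd d" by (rule prime_elemD2)
    with \<open>d dvd a\<close> \<open>\<not> p dvd a\<close> show False using dvd_trans by blast
  qed
qed

lemma irreducible_poly_coprime_iff:
  fixes A U :: "'a::field poly"
  assumes "irreducible A"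
  shows "coprime A U \<longleftrightarrow> \<not> A dvd U"
proof
  assume "coprime A U"
  then show "\<not> A dvd U"
    using irreducible_not_unit[OF assms] coprime_common_divisor[of A U A] by auto
next
  assume "\<not> A dvd U"
  with field_poly_irreducible_imp_prime[OF assms] show "coprime A U"
    by (rule prime_elem_coprime_if_not_dvd)
qed

lemma factor_out_irreducible_power:
  fixes A X :: "'a::field poly"
  assumes "irreducible A" "X \<noteq> 0"
  obtains m Z where "X = A ^ m * Z" "\<not> A dvd Z"
  using assms(2)
proof (induction "degree X" arbitrary: X thesis rule: less_induct)
  case less
  show ?case
  proof (cases "A dvd X")
    case False
    then show ?thesis using less.prems(1)[of 0 X] by simp
  next
    case True
    then obtain X1 where X1: "X = A * X1" by (auto elim: dvdE)
    with less.prems(2) have "X1 \<noteq> 0" by auto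
    with X1 less.prems(2) irreducible_degree_pos[OF assms(1)] have "degree X1 < degree X"
      by (simp add: degree_mult_eq)
    then obtain m Z where "X1 = A ^ m * Z" "\<not> A dvd Z" using less.hyps \<open>X1 \<noteq> 0\<close> by blast
    then show ?thesis using X1 less.prems(1)[of "Suc m" Z] by (simp add: mult.assoc)
  qed
qed

lemma coprime_power_right_poly:
  fixes X U :: "'a::field poly"
  assumes "coprime X U"
  shows "coprime X (U ^ m)"
  by (induction m) (simp_all add: assms coprime_mult_right_poly)

lemma exists_coprime_in_residue_class:
  fixes A X c :: "'a::field poly"
  assumes irr: "irreducible A" and "X \<noteq> 0" and "\<not> A dvd c"
  obtains U where "coprime X U" "U mod A = c mod A"
proof -
  obtain m Z where X: "X = A ^ m * Z" and "\<not> A dvd Z"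
    by (rule factor_out_irreducible_power[OF irr \<open>X \<noteq> 0\<close>])
  then obtain u v where uv: "u * A + v * Z = 1"
    using irreducible_poly_coprime_iff[OF irr] coprime_iff_bezout_poly by blast
  define U where "U = c * v * Z + u * A"
  \<comment> \<open>Chinese remaindering: U is congruent to c modulo A and to 1 modulo Z.\<close>
  have "U - c = U - c * (u * A + v * Z)" by (simp add: uv)
  also have "\<dots> = A * (u - c * u)" by (simp add: U_def algebra_simps)
  finally have U_mod: "U mod A = c mod A" by (simp add: mod_eq_dvd_iff)
  have "(v - c * v) * Z + 1 * U = u * A + v * Z" by (simp add: U_def algebra_simps)
  then have "(v - c * v) * Z + 1 * U = 1" by (simp add: uv)
  then have "coprime Z U" using coprime_iff_bezout_poly by blast
  moreover have "coprime A U"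
    using U_mod \<open>\<not> A dvd c\<close> by (simp add: irreducible_poly_coprime_iff[OF irr] dvd_eq_mod_eq_0)
  ultimately have "coprime U (A ^ m * Z)"
    by (simp add: coprime_commute coprime_mult_right_poly coprime_power_right_poly)
  then have "coprime X U" by (simp add: X coprime_commute)
  then show ?thesis using U_mod by (rule that)
qed

section \<open>Residues modulo A X\<close>

definition nondiv_residues :: "'a::field poly \<Rightarrow> 'a poly \<Rightarrow> 'a poly set" where
  "nondiv_residues A X = {Y. degree Y < degree (A * X) \<and> \<not> A dvd Y}"

definition coprime_nondiv_residues :: "'a::field poly \<Rightarrow> 'a poly \<Rightarrow> 'a poly set" where
  "coprime_nondiv_residues A X = {Y \<in> nondiv_residues A X. coprime X Y}"

definition coprime_residue_class :: "'a::field poly \<Rightarrow> 'a poly \<Rightarrow> 'a poly \<Rightarrow> 'a poly set" where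
  "coprime_residue_class A X r = {Y. degree Y < degree (A * X) \<and> Y mod A = r mod A \<and> coprime X Y}"

lemma count_Y_eq_card: "count_Y A X = card (coprime_residue_class A X 1)"
  by (simp add: count_Y_def coprime_residue_class_def)

lemma degree_less_in_polys_below: "{Y. degree Y < n \<and> P Y} \<subseteq> polys_below n"
  by (auto simp: polys_below_iff)

lemma finite_nondiv_residues: "finite (nondiv_residues A (X :: 'a::{finite,field} poly))"
  unfolding nondiv_residues_def by (rule finite_subset[OF degree_less_in_polys_below finite_polys_below])

lemma finite_coprime_residue_class:
  "finite (coprime_residue_class A (X :: 'a::{finite,field} poly) r)"
  unfolding coprime_residue_class_def
  by (rule finite_subset[OF degree_less_in_polys_below finite_polys_below])

lemma card_nondiv_residues:
  fixes A X :: "'a::{finite,field} poly"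
  assumes "A \<noteq> 0" "X \<noteq> 0"
  shows "card (nondiv_residues A X) = CARD('a) ^ degree X * (CARD('a) ^ degree A - 1)"
proof -
  let ?P = "polys_below (degree A + degree X) :: 'a poly set"
  let ?M = "{Y \<in> ?P. A dvd Y}"
  have split: "nondiv_residues A X = ?P - ?M"
    using assms by (auto simp: nondiv_residues_def polys_below_iff degree_mult_eq)
  have "inj_on (\<lambda>W. A * W) (polys_below (degree X))"
    using assms(1) by (auto simp: inj_on_def)
  then have card_M: "card ?M = CARD('a) ^ degree X"
    using assms(1) by (simp add: multiples_in_polys_below card_image card_polys_below)
  have "finite ?M" by (rule finite_subset[OF _ finite_polys_below]) auto
  with split card_M have "card (nondiv_residues A X) = CARD('a) ^ (degree A + degree X) - CARD('a) ^ degree X"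
    by (simp add: card_Diff_subset card_polys_below)
  then show ?thesis by (simp add: power_add diff_mult_distrib2 mult.commute)
qed

lemma mult_mod_in_coprime_residue_class:
  fixes A X U Y c r :: "'a::field poly"
  assumes "A \<noteq> 0" "X \<noteq> 0" "0 < degree A" and U: "coprime X U" "U mod A = c mod A"
    and Y: "Y \<in> coprime_residue_class A X r"
  shows "(U * Y) mod (A * X) \<in> coprime_residue_class A X (c * r)"
proof -
  have "Y mod A = r mod A" "coprime X Y" using Y by (simp_all add: coprime_residue_class_def)
  have "0 < degree (A * X)" using assms(1-3) by (simp add: degree_mult_eq)
  then have deg: "degree ((U * Y) mod (A * X)) < degree (A * X)"
    using degree_mod_less[of "A * X" "U * Y"] assms(1,2) by auto
  have "(U * Y) mod (A * X) mod A = (U * Y) mod A" by (simp add: mod_mod_cancel)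
  also have "\<dots> = ((U mod A) * (Y mod A)) mod A" by (simp add: mod_mult_eq)
  also have "\<dots> = (c * r) mod A" by (simp add: U(2) \<open>Y mod A = r mod A\<close> mod_mult_eq)
  finally have residue: "(U * Y) mod (A * X) mod A = (c * r) mod A" .
  have "coprime X ((U * Y) mod (A * X))"
    using coprime_mod_right_iff[OF \<open>X \<noteq> 0\<close>, of "(U * Y) mod (A * X)"]
      coprime_mult_right_poly[OF U(1) \<open>coprime X Y\<close>]
    by (simp add: mod_mod_cancel \<open>X \<noteq> 0\<close>)
  with deg residue show ?thesis by (simp add: coprime_residue_class_def)
qed

lemma card_coprime_residue_class_le:
  fixes A X c r :: "'a::{finite,field} poly"
  assumes irr: "irreducible A" and X: "X \<noteq> 0" and "\<not> A dvd c"
  shows "card (coprime_residue_class A X r) \<le> card (coprime_residue_class A X (c * r))"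
proof -
  obtain U where U: "coprime X U" "U mod A = c mod A"
    by (rule exists_coprime_in_residue_class[OF assms])
  have "A \<noteq> 0" using irr by auto
  have "coprime A U"
    using U(2) \<open>\<not> A dvd c\<close> by (simp add: irreducible_poly_coprime_iff[OF irr] dvd_eq_mod_eq_0)
  then have "coprime U (A * X)"
    using U(1) by (simp add: coprime_commute coprime_mult_right_poly)
  then have "coprime (A * X) U" by (simp add: coprime_commute)
  define \<phi> where "\<phi> Y = (U * Y) mod (A * X)" for Y
  have "\<phi> ` coprime_residue_class A X r \<subseteq> coprime_residue_class A X (c * r)"
    using mult_mod_in_coprime_residue_class[OF \<open>A \<noteq> 0\<close> X irreducible_degree_pos[OF irr] U]
    by (auto simp: \<phi>_def)
  moreover have "inj_on \<phi> (coprime_residue_class A X r)"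
  proof (rule inj_onI)
    fix Y1 Y2 assume Y: "Y1 \<in> coprime_residue_class A X r" "Y2 \<in> coprime_residue_class A X r"
      and "\<phi> Y1 = \<phi> Y2"
    then have "A * X dvd U * (Y1 - Y2)"
      by (simp add: \<phi>_def mod_eq_dvd_iff right_diff_distrib)
    then have "A * X dvd Y1 - Y2"
      using \<open>coprime (A * X) U\<close> by (rule coprime_dvd_mult_right_poly[rotated])
    moreover have "degree (Y1 - Y2) < degree (A * X)"
      using Y by (intro degree_diff_less) (simp_all add: coprime_residue_class_def)
    ultimately show "Y1 = Y2"
      by (cases "Y1 = Y2") (auto dest: dvd_imp_degree_le)
  qed
  ultimately show ?thesis
    by (intro card_inj_on_le finite_coprime_residue_class)
qed

lemma card_coprime_residue_class:
  fixes A X r :: "'a::{finite,field} poly"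
  assumes irr: "irreducible A" and X: "X \<noteq> 0" and "\<not> A dvd r"
  shows "card (coprime_residue_class A X r) = count_Y A X"
proof -
  obtain u v where uv: "u * A + v * r = 1"
    using assms irreducible_poly_coprime_iff coprime_iff_bezout_poly by blast
  have "v * r - 1 = v * r - (u * A + v * r)" by (simp add: uv)
  also have "\<dots> = A * (- u)" by (simp add: algebra_simps)
  finally have "(v * r) mod A = 1 mod A" by (simp add: mod_eq_dvd_iff)
  then have "coprime_residue_class A X (v * r) = coprime_residue_class A X 1"
    by (simp add: coprime_residue_class_def)
  moreover have "\<not> A dvd v"
  proof
    assume "A dvd v"
    then have "A dvd u * A + v * r" by simp
    with uv irreducible_not_unit[OF irr] show False by simp
  qed
  ultimately have "card (coprime_residue_class A X r) \<le> count_Y A X"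
    using card_coprime_residue_class_le[OF irr X, of v r] by (simp add: count_Y_eq_card)
  moreover have "count_Y A X \<le> card (coprime_residue_class A X r)"
    using card_coprime_residue_class_le[OF irr X \<open>\<not> A dvd r\<close>, of 1] by (simp add: count_Y_eq_card)
  ultimately show ?thesis by simp
qed

lemma card_coprime_nondiv_residues:
  fixes A X :: "'a::{finite,field} poly"
  assumes irr: "irreducible A" and X: "X \<noteq> 0"
  shows "card (coprime_nondiv_residues A X) = (CARD('a) ^ degree A - 1) * count_Y A X"
proof -
  have "A \<noteq> 0" using irr by auto
  define R where "R = polys_below (degree A) - {0 :: 'a poly}"
  have R_iff: "r \<in> R \<longleftrightarrow> r \<noteq> 0 \<and> degree r < degree A" for r
    by (auto simp: R_def polys_below_iff)
  have R_mod: "r mod A = r" if "r \<in> R" for r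
    using that by (simp add: R_iff mod_poly_less)
  have "coprime_nondiv_residues A X = (\<Union>r\<in>R. coprime_residue_class A X r)"
  proof (intro equalityI subsetI)
    fix Y assume Y: "Y \<in> coprime_nondiv_residues A X"
    then have "Y mod A \<in> R"
      using \<open>A \<noteq> 0\<close> by (auto simp: R_iff coprime_nondiv_residues_def nondiv_residues_def
          dvd_eq_mod_eq_0 degree_mod_less')
    moreover have "Y \<in> coprime_residue_class A X (Y mod A)"
      using Y by (simp add: coprime_nondiv_residues_def nondiv_residues_def coprime_residue_class_def)
    ultimately show "Y \<in> (\<Union>r\<in>R. coprime_residue_class A X r)" by blast
  next
    fix Y assume "Y \<in> (\<Union>r\<in>R. coprime_residue_class A X r)"
    then obtain r where "r \<in> R" "Y \<in> coprime_residue_class A X r" by blast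
    then show "Y \<in> coprime_nondiv_residues A X"
      using R_mod by (auto simp: R_iff coprime_residue_class_def coprime_nondiv_residues_def
          nondiv_residues_def dvd_eq_mod_eq_0)
  qed
  moreover have "coprime_residue_class A X r \<inter> coprime_residue_class A X r' = {}"
    if "r \<in> R" "r' \<in> R" "r \<noteq> r'" for r r'
    using that R_mod by (auto simp: coprime_residue_class_def)
  ultimately have "card (coprime_nondiv_residues A X) = (\<Sum>r\<in>R. card (coprime_residue_class A X r))"
    by (simp add: card_UN_disjoint R_def finite_polys_below finite_coprime_residue_class)
  also have "\<dots> = (\<Sum>r\<in>R. count_Y A X)"
    using card_coprime_residue_class[OF irr X] R_mod by (intro sum.cong) (auto simp: R_iff dvd_eq_mod_eq_0)
  also have "\<dots> = card R * count_Y A X" by simp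
  also have "card R = CARD('a) ^ degree A - 1"
    by (simp add: R_def card_polys_below finite_polys_below polys_below_iff)
  finally show ?thesis .
qed

section \<open>Splitting off the monic gcd\<close>

lemma monic_dvd_antisym:
  fixes p q :: "'a::idom poly"
  assumes "lead_coeff p = 1" "lead_coeff q = 1" "p dvd q" "q dvd p"
  shows "p = q"
proof -
  obtain k where k: "q = p * k" using assms(3) by (rule dvdE)
  have "p \<noteq> 0" "q \<noteq> 0" "k \<noteq> 0" using assms(1,2) k by auto
  then have "degree q \<le> degree p" using assms(4) by (simp add: dvd_imp_degree_le)
  then have "degree k = 0" using k \<open>p \<noteq> 0\<close> \<open>k \<noteq> 0\<close> by (simp add: degree_mult_eq)
  moreover have "lead_coeff k = 1" using k assms(1,2) by (simp add: lead_coeff_mult)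
  ultimately have "k = 1" by (metis degree_eq_zeroE lead_coeff_pCons(2) one_pCons pCons_0_0)
  with k show ?thesis by simp
qed

text \<open>The library's gcd on polynomials needs a factorial coefficient ring, which an
  arbitrary finite field type is not; a monic generator of the ideal (X, Y) serves instead.\<close>
definition monic_gcd :: "'a::field poly \<Rightarrow> 'a poly \<Rightarrow> 'a poly" where
  "monic_gcd X Y = (SOME D. lead_coeff D = 1 \<and> D dvd X \<and> D dvd Y \<and> (\<exists>u v. D = u * X + v * Y))"

lemma monic_gcd_spec:
  fixes X Y :: "'a::field poly"
  assumes "X \<noteq> 0"
  shows "lead_coeff (monic_gcd X Y) = 1 \<and> monic_gcd X Y dvd X \<and> monic_gcd X Y dvd Y \<and>
    (\<exists>u v. monic_gcd X Y = u * X + v * Y)"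
  unfolding monic_gcd_def
  by (rule someI_ex) (metis poly_bezout_monic[OF assms])

lemma coprime_div_monic_gcd:
  fixes X Y :: "'a::field poly"
  assumes "X \<noteq> 0"
  shows "coprime (X div monic_gcd X Y) (Y div monic_gcd X Y)"
proof -
  let ?G = "monic_gcd X Y"
  have G: "lead_coeff ?G = 1" "?G dvd X" "?G dvd Y" and "\<exists>u v. ?G = u * X + v * Y"
    using monic_gcd_spec[OF assms, of Y] by auto
  then obtain u v where uv: "?G = u * X + v * Y" by blast
  have "?G \<noteq> 0" using G(1) by auto
  have "?G * (u * (X div ?G) + v * (Y div ?G)) = u * (?G * (X div ?G)) + v * (?G * (Y div ?G))"
    by (simp add: algebra_simps)
  also have "\<dots> = ?G * 1" using G(2,3) uv by simp
  finally have "?G * (u * (X div ?G) + v * (Y div ?G)) = ?G * 1" .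
  then have "u * (X div ?G) + v * (Y div ?G) = 1" using \<open>?G \<noteq> 0\<close> by simp
  then show ?thesis by (auto simp: coprime_iff_bezout_poly)
qed

lemma monic_gcd_mult_coprime:
  fixes D X Y :: "'a::field poly"
  assumes "lead_coeff D = 1" "X \<noteq> 0" "coprime X Y"
  shows "monic_gcd (D * X) (D * Y) = D"
proof (rule monic_dvd_antisym[OF _ assms(1)])
  have "D * X \<noteq> 0" using assms by auto
  from monic_gcd_spec[OF this, of "D * Y"]
  obtain u v where uv: "monic_gcd (D * X) (D * Y) = u * (D * X) + v * (D * Y)"
    and G: "lead_coeff (monic_gcd (D * X) (D * Y)) = 1"
      "monic_gcd (D * X) (D * Y) dvd D * X" "monic_gcd (D * X) (D * Y) dvd D * Y"
    by blast
  show "lead_coeff (monic_gcd (D * X) (D * Y)) = 1" by (fact G(1))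
  show "D dvd monic_gcd (D * X) (D * Y)" by (simp add: uv)
  obtain a b where "a * X + b * Y = 1" using assms(3) coprime_iff_bezout_poly by blast
  then have "D = a * (D * X) + b * (D * Y)" by (simp add: algebra_simps flip: distrib_left)
  moreover have "monic_gcd (D * X) (D * Y) dvd a * (D * X) + b * (D * Y)" using G(2,3) by simp
  ultimately show "monic_gcd (D * X) (D * Y) dvd D" by simp
qed

definition monic_multiples :: "'a::field poly \<Rightarrow> 'a poly set" where
  "monic_multiples A = {X. X \<noteq> 0 \<and> lead_coeff X = 1 \<and> A dvd X}"

definition monic_nonmultiples :: "'a::field poly \<Rightarrow> 'a poly set" where
  "monic_nonmultiples A = {D. lead_coeff D = 1 \<and> \<not> A dvd D}"

lemma mult_mem_nondiv_residue_pairs: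
  fixes A D X Y :: "'a::field poly"
  assumes irr: "irreducible A" and D: "D \<in> monic_nonmultiples A"
    and X: "X \<in> monic_multiples A" and Y: "Y \<in> coprime_nondiv_residues A X"
  shows "(D * X, D * Y) \<in> Sigma (monic_multiples A) (nondiv_residues A)"
proof -
  have "A \<noteq> 0" "D \<noteq> 0" "X \<noteq> 0" "Y \<noteq> 0"
    using irr D X Y by (auto simp: monic_nonmultiples_def monic_multiples_def
        coprime_nondiv_residues_def nondiv_residues_def)
  have "degree (D * Y) < degree (A * (D * X))"
    using Y \<open>A \<noteq> 0\<close> \<open>D \<noteq> 0\<close> \<open>X \<noteq> 0\<close> \<open>Y \<noteq> 0\<close>
    by (simp add: coprime_nondiv_residues_def nondiv_residues_def degree_mult_eq)
  moreover have "\<not> A dvd D * Y"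
    using D Y field_poly_irreducible_imp_prime[OF irr]
    by (simp add: prime_elem_dvd_mult_iff monic_nonmultiples_def coprime_nondiv_residues_def
        nondiv_residues_def)
  ultimately show ?thesis
    using D X \<open>D \<noteq> 0\<close> by (simp add: monic_multiples_def monic_nonmultiples_def nondiv_residues_def
        lead_coeff_mult)
qed

lemma monic_gcd_split_mem:
  fixes A X Y :: "'a::field poly"
  assumes irr: "irreducible A" and X: "X \<in> monic_multiples A" and Y: "Y \<in> nondiv_residues A X"
  defines "G \<equiv> monic_gcd X Y"
  shows "G \<in> monic_nonmultiples A"
    and "(X div G, Y div G) \<in> Sigma (monic_multiples A) (coprime_nondiv_residues A)"
proof -
  have "A \<noteq> 0" "X \<noteq> 0" "lead_coeff X = 1" "A dvd X"
    using irr X by (auto simp: monic_multiples_def)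
  have "degree Y < degree (A * X)" "\<not> A dvd Y" using Y by (auto simp: nondiv_residues_def)
  have G: "lead_coeff G = 1" "G dvd X" "G dvd Y"
    using monic_gcd_spec[OF \<open>X \<noteq> 0\<close>, of Y] by (auto simp: G_def)
  define X' Y' where "X' = X div G" and "Y' = Y div G"
  have "X = G * X'" "Y = G * Y'" using G by (simp_all add: X'_def Y'_def)
  have "\<not> A dvd G" using G(3) \<open>\<not> A dvd Y\<close> dvd_trans by blast
  then show "G \<in> monic_nonmultiples A" using G(1) by (simp add: monic_nonmultiples_def)
  have "G \<noteq> 0" "X' \<noteq> 0" "Y' \<noteq> 0"
    using G(1) \<open>X = G * X'\<close> \<open>X \<noteq> 0\<close> \<open>Y = G * Y'\<close> \<open>\<not> A dvd Y\<close> by auto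
  have "X' \<in> monic_multiples A"
    using \<open>X = G * X'\<close> \<open>lead_coeff X = 1\<close> \<open>A dvd X\<close> \<open>\<not> A dvd G\<close> G(1) \<open>X' \<noteq> 0\<close>
      field_poly_irreducible_imp_prime[OF irr]
    by (auto simp: monic_multiples_def lead_coeff_mult prime_elem_dvd_mult_iff)
  moreover have "degree Y' < degree (A * X')"
    using \<open>degree Y < degree (A * X)\<close> \<open>X = G * X'\<close> \<open>Y = G * Y'\<close> \<open>A \<noteq> 0\<close> \<open>G \<noteq> 0\<close> \<open>X' \<noteq> 0\<close> \<open>Y' \<noteq> 0\<close>
    by (simp add: degree_mult_eq)
  moreover have "\<not> A dvd Y'" using \<open>Y = G * Y'\<close> \<open>\<not> A dvd Y\<close> by auto
  moreover have "coprime X' Y'"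
    using coprime_div_monic_gcd[OF \<open>X \<noteq> 0\<close>, of Y] by (simp add: X'_def Y'_def G_def)
  ultimately show "(X div G, Y div G) \<in> Sigma (monic_multiples A) (coprime_nondiv_residues A)"
    by (simp add: X'_def Y'_def coprime_nondiv_residues_def nondiv_residues_def)
qed

lemma bij_betw_monic_gcd_split:
  fixes A :: "'a::field poly"
  assumes irr: "irreducible A"
  shows "bij_betw (\<lambda>(D, X, Y). (D * X, D * Y))
           (monic_nonmultiples A \<times> Sigma (monic_multiples A) (coprime_nondiv_residues A))
           (Sigma (monic_multiples A) (nondiv_residues A))"
proof -
  let ?S = "monic_nonmultiples A \<times> Sigma (monic_multiples A) (coprime_nondiv_residues A)"
  let ?T = "Sigma (monic_multiples A) (nondiv_residues A)"
  let ?mult = "\<lambda>(D, X, Y). (D * X, D * Y)"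
  define unsplit :: "'a poly \<times> 'a poly \<Rightarrow> 'a poly \<times> 'a poly \<times> 'a poly" where
    "unsplit = (\<lambda>(X, Y). (monic_gcd X Y, X div monic_gcd X Y, Y div monic_gcd X Y))"
  have "\<forall>t\<in>?S. unsplit (?mult t) = t"
    by (auto simp: unsplit_def monic_gcd_mult_coprime monic_nonmultiples_def monic_multiples_def
        coprime_nondiv_residues_def)
  moreover have "\<forall>p\<in>?T. ?mult (unsplit p) = p"
  proof
    fix p assume "p \<in> ?T"
    then obtain X Y where p: "p = (X, Y)" and "X \<noteq> 0" by (auto simp: monic_multiples_def)
    then have "monic_gcd X Y dvd X" "monic_gcd X Y dvd Y" using monic_gcd_spec by blast+
    then show "?mult (unsplit p) = p" by (simp add: p unsplit_def)
  qed
  moreover have "?mult ` ?S \<subseteq> ?T" using mult_mem_nondiv_residue_pairs[OF irr] by auto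
  moreover have "unsplit ` ?T \<subseteq> ?S" using monic_gcd_split_mem[OF irr] by (auto simp: unsplit_def)
  ultimately show ?thesis by (rule bij_betw_byWitness)
qed

section \<open>The Dirichlet series of count_Y\<close>

lemma has_sum_monic_multiples:
  fixes A :: "'a::{finite,field} poly" and u :: complex
  assumes monic: "lead_coeff A = 1" and u: "norm (of_nat CARD('a) * u) < 1"
  shows "((\<lambda>X. u ^ degree X) has_sum (u ^ degree A / (1 - of_nat CARD('a) * u))) (monic_multiples A)"
proof -
  have "A \<noteq> 0" using monic by auto
  have "bij_betw (\<lambda>Z. A * Z) {Z. lead_coeff Z = 1} (monic_multiples A)"
  proof (rule bij_betwI')
    fix Y assume "Y \<in> monic_multiples A"
    then have "Y = A * (Y div A)" "lead_coeff (Y div A) = 1"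
      using monic by (auto simp: monic_multiples_def lead_coeff_mult elim!: dvdE)
    then show "\<exists>Z\<in>{Z. lead_coeff Z = 1}. Y = A * Z" by blast
  qed (use \<open>A \<noteq> 0\<close> monic in \<open>auto simp: monic_multiples_def lead_coeff_mult\<close>)
  moreover have "((\<lambda>Z. u ^ degree (A * Z)) has_sum (u ^ degree A * (1 / (1 - of_nat CARD('a) * u))))
      {Z. lead_coeff Z = 1}"
  proof (rule has_sum_cong[THEN iffD1, OF _ has_sum_cmult_right[OF has_sum_monic_powers[OF u]]])
    fix Z :: "'a poly" assume "Z \<in> {Z. lead_coeff Z = 1}"
    then have "Z \<noteq> 0" by auto
    with \<open>A \<noteq> 0\<close> show "u ^ degree A * u ^ degree Z = u ^ degree (A * Z)"
      by (simp add: degree_mult_eq power_add)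
  qed
  ultimately show ?thesis
    using has_sum_reindex_bij_betw[where f = "\<lambda>X. u ^ degree X"] by fastforce
qed

lemma has_sum_monic_nonmultiples:
  fixes A :: "'a::{finite,field} poly" and u :: complex
  assumes monic: "lead_coeff A = 1" and u: "norm (of_nat CARD('a) * u) < 1"
  shows "((\<lambda>X. u ^ degree X) has_sum ((1 - u ^ degree A) / (1 - of_nat CARD('a) * u)))
           (monic_nonmultiples A)"
proof -
  let ?M = "{X::'a poly. lead_coeff X = 1}"
  have all: "((\<lambda>X. u ^ degree X) has_sum (1 / (1 - of_nat CARD('a) * u))) ?M"
    by (rule has_sum_monic_powers[OF u])
  have "monic_nonmultiples A \<subseteq> ?M" by (auto simp: monic_nonmultiples_def)
  then obtain V where V: "((\<lambda>X. u ^ degree X) has_sum V) (monic_nonmultiples A)"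
    using summable_on_subset_banach[OF has_sum_imp_summable[OF all]] by (auto simp: summable_on_def)
  have "((\<lambda>X. u ^ degree X) has_sum (V + u ^ degree A / (1 - of_nat CARD('a) * u)))
      (monic_nonmultiples A \<union> monic_multiples A)"
    by (rule has_sum_Un_disjoint[OF V has_sum_monic_multiples[OF monic u]])
      (auto simp: monic_nonmultiples_def monic_multiples_def)
  moreover have "monic_nonmultiples A \<union> monic_multiples A = ?M"
    by (auto simp: monic_nonmultiples_def monic_multiples_def)
  ultimately have "V + u ^ degree A / (1 - of_nat CARD('a) * u) = 1 / (1 - of_nat CARD('a) * u)"
    using all has_sum_unique by metis
  then have "V = (1 - u ^ degree A) / (1 - of_nat CARD('a) * u)"
    by (simp add: diff_divide_distrib eq_diff_eq)
  with V show ?thesis by simp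
qed

lemma has_sum_nondiv_residue_pairs:
  fixes A :: "'a::{finite,field} poly" and z :: complex
  assumes monic: "lead_coeff A = 1" and irr: "irreducible A"
    and z: "norm (of_nat CARD('a) * (of_nat CARD('a) * z)) < 1"
  defines "q \<equiv> of_nat CARD('a) :: complex"
  shows "((\<lambda>(X, Y). z ^ degree X) has_sum
           (of_nat (CARD('a) ^ degree A - 1) * ((q * z) ^ degree A / (1 - q * (q * z)))))
           (Sigma (monic_multiples A) (nondiv_residues A))"
proof -
  let ?N = "CARD('a) ^ degree A - 1"
  have "A \<noteq> 0" using irr by auto
  have card: "card (nondiv_residues A X) = CARD('a) ^ degree X * ?N" if "X \<in> monic_multiples A" for X
    using card_nondiv_residues[OF \<open>A \<noteq> 0\<close>] that by (simp add: monic_multiples_def)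
  have sums: "((\<lambda>X. (q * z) ^ degree X) has_sum ((q * z) ^ degree A / (1 - q * (q * z)))) (monic_multiples A)"
    using has_sum_monic_multiples[OF monic, of "q * z"] z by (simp add: q_def)
  then have "(\<lambda>X. norm ((q * z) ^ degree X)) summable_on monic_multiples A"
    by (simp add: summable_on_iff_abs_summable_on_complex[symmetric] has_sum_imp_summable)
  then have norm_summable: "(\<lambda>X. real ?N * norm ((q * z) ^ degree X)) summable_on monic_multiples A"
    by (rule summable_on_cmult_right)
  show ?thesis
    by (rule has_sum_Sigma_finite_fibres[OF finite_nondiv_residues
          summable_on_cong[THEN iffD1, OF _ norm_summable]
          has_sum_cong[THEN iffD1, OF _ has_sum_cmult_right[OF sums]]])
      (simp_all add: card q_def norm_mult norm_power power_mult_distrib)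
qed

lemma has_sum_gcd_split:
  fixes A :: "'a::field poly" and z S :: complex
  assumes irr: "irreducible A"
    and "((\<lambda>(X, Y). z ^ degree X) has_sum S) (Sigma (monic_multiples A) (nondiv_residues A))"
  shows "((\<lambda>(D, p). z ^ degree D * z ^ degree (fst p)) has_sum S)
           (monic_nonmultiples A \<times> Sigma (monic_multiples A) (coprime_nondiv_residues A))"
proof -
  have "((\<lambda>(D, X, Y). z ^ degree (D * X)) has_sum S)
      (monic_nonmultiples A \<times> Sigma (monic_multiples A) (coprime_nondiv_residues A))"
    using assms(2) has_sum_reindex_bij_betw[OF bij_betw_monic_gcd_split[OF irr],
        where f = "\<lambda>(X, Y). z ^ degree X"]
    by (simp add: case_prod_unfold)
  then show ?thesis
  proof (rule has_sum_cong[THEN iffD1, rotated])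
    fix x assume "x \<in> monic_nonmultiples A \<times> Sigma (monic_multiples A) (coprime_nondiv_residues A)"
    then obtain D X Y where x: "x = (D, X, Y)" "lead_coeff D = 1" "lead_coeff X = 1"
      by (auto simp: monic_nonmultiples_def monic_multiples_def)
    then have "D \<noteq> 0" "X \<noteq> 0" by auto
    then show "(case x of (D, X, Y) \<Rightarrow> z ^ degree (D * X)) =
        (case x of (D, p) \<Rightarrow> z ^ degree D * z ^ degree (fst p))"
      by (simp add: x degree_mult_eq power_add)
  qed
qed

lemma has_sum_coprime_nondiv_residue_pairs:
  fixes A :: "'a::{finite,field} poly" and z :: complex
  assumes monic: "lead_coeff A = 1" and irr: "irreducible A"
    and z: "norm (of_nat CARD('a) * (of_nat CARD('a) * z)) < 1"
  defines "q \<equiv> of_nat CARD('a) :: complex"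
  shows "((\<lambda>p. z ^ degree (fst p)) has_sum
           (of_nat (CARD('a) ^ degree A - 1) * ((q * z) ^ degree A / (1 - q * (q * z)))
             / ((1 - z ^ degree A) / (1 - q * z))))
           (Sigma (monic_multiples A) (coprime_nondiv_residues A))"
proof -
  define F where "F = (1 - z ^ degree A) / (1 - q * z)"
  have "2 \<le> norm q" using two_le_card_field[where 'a='a] by (simp add: q_def)
  then have "norm (q * z) * 2 \<le> norm (q * (q * z))" "norm z * 2 \<le> norm (q * z)"
    by (simp_all add: norm_mult mult_right_mono mult.commute[of _ 2])
  with z have qz: "norm (q * z) < 1" and "norm z < 1" by (simp_all add: q_def)
  then have "norm (z ^ degree A) < 1"
    using irreducible_degree_pos[OF irr] by (simp add: norm_power power_less_one_iff)
  with qz have "F \<noteq> 0" by (auto simp: F_def)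
  have one: "1 \<in> monic_nonmultiples A"
    using irreducible_not_unit[OF irr] by (simp add: monic_nonmultiples_def)
  have nonmultiples: "((\<lambda>D. z ^ degree D) has_sum F) (monic_nonmultiples A)"
    using has_sum_monic_nonmultiples[OF monic qz[unfolded q_def]] by (simp add: F_def q_def)
  have "((\<lambda>(D, p). z ^ degree D * z ^ degree (fst p)) has_sum
      (of_nat (CARD('a) ^ degree A - 1) * ((q * z) ^ degree A / (1 - q * (q * z)))))
      (monic_nonmultiples A \<times> Sigma (monic_multiples A) (coprime_nondiv_residues A))"
    using has_sum_gcd_split[OF irr has_sum_nondiv_residue_pairs[OF monic irr z]] by (simp add: q_def)
  from has_sum_product_cancel_left[where f = "\<lambda>D. z ^ degree D", OF this nonmultiples \<open>F \<noteq> 0\<close> one]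
  show ?thesis by (simp add: F_def)
qed

lemma has_sum_count_Y_powers:
  fixes A :: "'a::{finite,field} poly" and z :: complex
  assumes monic: "lead_coeff A = 1" and irr: "irreducible A"
    and z: "norm (of_nat CARD('a) * (of_nat CARD('a) * z)) < 1"
  defines "q \<equiv> of_nat CARD('a) :: complex"
  shows "((\<lambda>X. z ^ degree X * of_nat (count_Y A X)) has_sum
           ((q * z) ^ degree A * (1 - q * z) / ((1 - q * (q * z)) * (1 - z ^ degree A))))
           (monic_multiples A)"
proof -
  define N where "N = (of_nat (CARD('a) ^ degree A - 1) :: complex)"
  define S where "S = N * ((q * z) ^ degree A / (1 - q * (q * z))) / ((1 - z ^ degree A) / (1 - q * z))"
  have "1 < CARD('a) ^ degree A"
    using two_le_card_field[where 'a='a] irreducible_degree_pos[OF irr] by (intro one_less_power) auto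
  then have "N \<noteq> 0" unfolding N_def by (metis less_numeral_extra(3) of_nat_eq_0_iff zero_less_diff)
  have "((\<lambda>p. z ^ degree (fst p)) has_sum S) (Sigma (monic_multiples A) (coprime_nondiv_residues A))"
    using has_sum_coprime_nondiv_residue_pairs[OF monic irr z] by (simp add: S_def N_def q_def)
  then have "((\<lambda>X. z ^ degree X * of_nat (card (coprime_nondiv_residues A X))) has_sum S)
      (monic_multiples A)"
  proof (rule has_sum_Sigma')
    fix X
    have "finite (coprime_nondiv_residues A X)"
      unfolding coprime_nondiv_residues_def by (rule finite_subset[OF _ finite_nondiv_residues]) auto
    then show "((\<lambda>Y. z ^ degree (fst (X, Y))) has_sum
        z ^ degree X * of_nat (card (coprime_nondiv_residues A X))) (coprime_nondiv_residues A X)"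
      by (rule has_sum_finiteI) simp
  qed
  then have "((\<lambda>X. 1 / N * (z ^ degree X * of_nat (card (coprime_nondiv_residues A X)))) has_sum
      (1 / N * S)) (monic_multiples A)"
    by (rule has_sum_cmult_right)
  then have "((\<lambda>X. z ^ degree X * of_nat (count_Y A X)) has_sum (1 / N * S)) (monic_multiples A)"
  proof (rule has_sum_cong[THEN iffD1, rotated])
    fix X assume "X \<in> monic_multiples A"
    then have "of_nat (card (coprime_nondiv_residues A X)) = N * of_nat (count_Y A X)"
      by (simp add: monic_multiples_def card_coprime_nondiv_residues[OF irr] N_def)
    with \<open>N \<noteq> 0\<close> show "1 / N * (z ^ degree X * of_nat (card (coprime_nondiv_residues A X))) =
        z ^ degree X * of_nat (count_Y A X)"
      by simp
  qed
  moreover have "1 / N * S = (q * z) ^ degree A * (1 - q * z) / ((1 - q * (q * z)) * (1 - z ^ degree A))"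
    using \<open>N \<noteq> 0\<close> by (simp add: S_def divide_inverse inverse_mult_distrib mult_ac)
  ultimately show ?thesis by simp
qed

theorem lemma3p5:
  fixes A :: "'a::{finite,field} poly" and s :: complex
  assumes "prime (CARD('a))" and "CARD('a) > 3"
    and "lead_coeff A = 1" and "irreducible A"
    and "Re s > 1"
  shows "((\<lambda>X. pnorm X powr (- (2 * s)) * of_nat (count_Y A X)) has_sum
           (of_nat (CARD('a)) powr (of_nat (degree A) * (1 - 2 * s))
              / (1 - of_nat (CARD('a)) powr (- 2 * of_nat (degree A) * s))
            * (zeta_Fq TYPE('a) (2 * s - 1) / zeta_Fq TYPE('a) (2 * s))))
         {X. X \<noteq> 0 \<and> lead_coeff X = 1 \<and> A dvd X}"
proof -
  define q where "q = (of_nat CARD('a) :: complex)"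
  define z where "z = q powr (- (2 * s))"
  have "q \<noteq> 0" by (simp add: q_def)
  have qz: "q powr (1 - 2 * s) = q * z"
    using of_nat_powr_one_minus[of "CARD('a)" "2 * s"] by (simp add: q_def z_def)
  have qqz: "q powr (1 - (2 * s - 1)) = q * (q * z)"
    using of_nat_powr_one_minus[of "CARD('a)" "2 * s - 1"] qz by (simp add: q_def)
  have "norm (q * (q * z)) = norm (q powr (1 - (2 * s - 1)))"
    by (simp only: qqz)
  also have "\<dots> < 1"
    unfolding q_def using assms(5) by (intro norm_card_powr_less_one) simp
  finally have "norm (of_nat CARD('a) * (of_nat CARD('a) * z)) < 1"
    by (simp add: q_def)
  from has_sum_count_Y_powers[OF assms(3,4) this]
  have "((\<lambda>X. pnorm X powr (- (2 * s)) * of_nat (count_Y A X)) has_sum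
           ((q * z) ^ degree A * (1 - q * z) / ((1 - q * (q * z)) * (1 - z ^ degree A))))
         (monic_multiples A)"
    by (simp add: pnorm_powr z_def q_def)
  moreover have "zeta_Fq TYPE('a) (2 * s) = 1 / (1 - q * z)"
    using zeta_Fq_eq[where 'a='a, of "2 * s"] assms(5) qz by (simp add: q_def)
  moreover have "zeta_Fq TYPE('a) (2 * s - 1) = 1 / (1 - q * (q * z))"
    using zeta_Fq_eq[where 'a='a, of "2 * s - 1"] assms(5) qqz by (simp add: q_def)
  moreover have "of_nat CARD('a) powr (of_nat (degree A) * (1 - 2 * s)) = (q * z) ^ degree A"
    using powr_power[OF \<open>q \<noteq> 0\<close>, of "1 - 2 * s" "degree A"] qz by (simp add: q_def)
  moreover have "of_nat CARD('a) powr (- 2 * of_nat (degree A) * s) = z ^ degree A"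
    using powr_power[OF \<open>q \<noteq> 0\<close>, of "- (2 * s)" "degree A"] by (simp add: q_def z_def mult_ac)
  ultimately show ?thesis
    by (simp add: monic_multiples_def divide_inverse inverse_mult_distrib mult_ac)
qed

end
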